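(* Let $\mathcal{D}=\{(\mathbf{x}_i,y_i)\}_{i\in\mathcal{D}}$ be a finite training set with inputs $\mathcal{X}=\{\mathbf{x}_i\}_{i\in\mathcal{D}}$, let $\boldsymbol{\phi}_i=\boldsymbol{\phi}(\mathbf{x}_i)\in\mathbb{R}^P$ be feature vectors, and consider the generalized linear model $f_{\mathbf{w}}^i=\boldsymbol{\phi}_i^\top\mathbf{w}$, $\mathbf{w}\in\mathbb{R}^P$. Let $A$ be the (strictly convex, differentiable) log-partition function of a scalar exponential family, $h=A'$, and define the loss $\ell(y,h(f))=-yf+A(f)$, with $\ell_i(\mathbf{w})=\ell(y_i,h(f_{\mathbf{w}}^i))$. Let $\mathcal{R}(\mathbf{w})=\tfrac12\delta\|\mathbf{w}\|^2$ with $\delta>0$, and let $$\mathbf{w}_*=\arg\min_{\mathbf{w}}\sum_{i\in\mathcal{D}}\ell_i(\mathbf{w})+\mathcal{R}(\mathbf{w}).$$ Define the K-prior with memory $\mathcal{M}=\mathcal{X}$: $$\mathcal{K}(\mathbf{w};\mathbf{w}_*,\mathcal{X})=\sum_{i\in\mathcal{X}}\ell\big(h(f_{\mathbf{w}_*}^i),h(f_{\mathbf{w}}^i)\big)+\tfrac12\delta\|\mathbf{w}-\mathbf{w}_*\|^2,$$ where $\ell(h(f_{\mathbf{w}_*}^i),h(f_{\mathbf{w}}^i))=-h(f_{\mathbf{w}_*}^i)f_{\mathbf{w}}^i+A(f_{\mathbf{w}}^i)$. Let $j\notin\mathcal{D}$ be a new example $(\mathbf{x}_j,y_j)$ and $k\in\mathcal{D}$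 an existing example, and define $$\mathbf{w}_+=\arg\min_{\mathbf{w}}\sum_{i\in\mathcal{D}\cup j}\ell_i(\mathbf{w})+\mathcal{R}(\mathbf{w}),\qquad \mathbf{w}_-=\arg\min_{\mathbf{w}}\sum_{i\in\mathcal{D}\setminus k}\ell_i(\mathbf{w})+\mathcal{R}(\mathbf{w}),$$ $$\hat{\mathbf{w}}_+=\arg\min_{\mathbf{w}}\ \ell_j(\mathbf{w})+\mathcal{K}(\mathbf{w};\mathbf{w}_*,\mathcal{X}),\qquad \hat{\mathbf{w}}_-=\arg\min_{\mathbf{w}}\ -\ell_k(\mathbf{w})+\mathcal{K}(\mathbf{w};\mathbf{w}_*,\mathcal{X}).$$ Then $\mathbf{w}_+=\hat{\mathbf{w}}_+$ and $\mathbf{w}_-=\hat{\mathbf{w}}_-$.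
   Context: All minimizations are over the parameter space $\mathbb{R}^P$. $\mathbf{w}_*$ is the base model trained on $\mathcal{D}$; the K-prior replaces the true labels $y_i$ by the base model's predictions $h(f_{\mathbf{w}_*}^i)$ and uses $\mathbf{w}_*$ as the center of the quadratic weight term. Example: for binary cross-entropy, $y\in\{0,1\}$, $A(f)=\log(1+e^f)$ and $h$ is the sigmoid. *)

theory Defs
  imports "HOL-Analysis.Analysis"
begin

definition strictly_convex_on :: "'a::real_vector set \<Rightarrow> ('a \<Rightarrow> real) \<Rightarrow> bool" where
  "strictly_convex_on S g \<longleftrightarrow> convex S \<and>
    (\<forall>x\<in>S. \<forall>y\<in>S. x \<noteq> y \<longrightarrow> (\<forall>u. 0 < u \<and> u < 1 \<longrightarrow>
       g ((1 - u) *\<^sub>R x + u *\<^sub>R y) < (1 - u) * g x + u * g y))"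

text \<open>Exponential-family loss, written in the natural parameter f:
  ell(y, h(f)) = - y f + A(f).\<close>
definition expfam_loss :: "(real \<Rightarrow> real) \<Rightarrow> real \<Rightarrow> real \<Rightarrow> real" where
  "expfam_loss A y f = - y * f + A f"

definition glm_out :: "('i \<Rightarrow> real ^ 'p) \<Rightarrow> real ^ 'p \<Rightarrow> 'i \<Rightarrow> real" where
  "glm_out \<phi> w i = \<phi> i \<bullet> w"

definition ex_loss :: "(real \<Rightarrow> real) \<Rightarrow> ('i \<Rightarrow> real ^ 'p) \<Rightarrow> ('i \<Rightarrow> real) \<Rightarrow> 'i \<Rightarrow> real ^ 'p \<Rightarrow> real" where
  "ex_loss A \<phi> y i w = expfam_loss A (y i) (glm_out \<phi> w i)"

definition reg_risk :: "(real \<Rightarrow> real) \<Rightarrow> ('i \<Rightarrow> real ^ 'p) \<Rightarrow> ('i \<Rightarrow> real) \<Rightarrow> real \<Rightarrow> 'i set \<Rightarrow> real ^ 'p \<Rightarrow> real" where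
  "reg_risk A \<phi> y \<delta> S w = (\<Sum>i\<in>S. ex_loss A \<phi> y i w) + \<delta> / 2 * (norm w)\<^sup>2"

text \<open>K-prior with memory the inputs of D (indexed by D):
  K(w; w_*, X) = sum_{i in D} ell(h(f_{w_*}^i), h(f_w^i)) + delta/2 ||w - w_*||^2.\<close>
definition kprior :: "(real \<Rightarrow> real) \<Rightarrow> (real \<Rightarrow> real) \<Rightarrow> ('i \<Rightarrow> real ^ 'p) \<Rightarrow> real \<Rightarrow> 'i set \<Rightarrow> real ^ 'p \<Rightarrow> real ^ 'p \<Rightarrow> real" where
  "kprior A h \<phi> \<delta> D wstar w =
     (\<Sum>i\<in>D. expfam_loss A (h (glm_out \<phi> wstar i)) (glm_out \<phi> w i)) + \<delta> / 2 * (norm (w - wstar))\<^sup>2"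

definition is_minimizer :: "('a \<Rightarrow> real) \<Rightarrow> 'a \<Rightarrow> bool" where
  "is_minimizer g x \<longleftrightarrow> (\<forall>v. g x \<le> g v)"

end

theory Submission
  imports Defs
begin

text \<open>At the minimiser \<open>wstar\<close> of the regularised risk on \<open>D\<close> the first-order condition
  \<open>(\<Sum>i\<in>D. (h (\<phi> i \<bullet> wstar) - y i) * (\<phi> i \<bullet> v)) + \<delta> * (wstar \<bullet> v) = 0\<close> holds for
  every \<open>v\<close>. Taking \<open>v = w\<close>, this is precisely the term by which the K-prior at \<open>w\<close> differs from
  the regularised risk on \<open>D\<close> at \<open>w\<close>, apart from the constant \<open>\<delta>/2 \<parallel>wstar\<parallel>\<^sup>2\<close>. Hence
  adding \<open>\<ell>\<^sub>j\<close> to, or subtracting \<open>\<ell>\<^sub>k\<close> from, the K-prior yields the regularised risk on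
  \<open>D \<union> {j}\<close> or \<open>D - {k}\<close> shifted by a constant. These risks are strictly convex thanks to the
  weight-decay term, so their minimisers are unique.\<close>

lemma strictly_convex_on_imp_convex_on:
  assumes "strictly_convex_on S g"
  shows "convex_on S g"
proof (rule convex_onI)
  show "convex S" using assms unfolding strictly_convex_on_def by blast
next
  fix t :: real and x y assume "0 < t" "t < 1" "x \<in> S" "y \<in> S"
  then show "g ((1 - t) *\<^sub>R x + t *\<^sub>R y) \<le> (1 - t) * g x + t * g y"
    using assms unfolding strictly_convex_on_def
    by (cases "x = y") (auto simp: scaleR_collapse algebra_simps intro: less_imp_le)
qed

lemma strictly_convex_on_add:
  assumes "convex_on S f" "strictly_convex_on S g"
  shows "strictly_convex_on S (\<lambda>x. f x + g x)"
  unfolding strictly_convex_on_def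
proof (intro conjI ballI impI allI)
  show "convex S" using assms(2) unfolding strictly_convex_on_def by blast
next
  fix x y and u :: real assume "x \<in> S" "y \<in> S" "x \<noteq> y" and u: "0 < u \<and> u < 1"
  then have "f ((1 - u) *\<^sub>R x + u *\<^sub>R y) \<le> (1 - u) * f x + u * f y"
    using convex_onD[OF assms(1)] by simp
  moreover have "g ((1 - u) *\<^sub>R x + u *\<^sub>R y) < (1 - u) * g x + u * g y"
    using assms(2) \<open>x \<in> S\<close> \<open>y \<in> S\<close> \<open>x \<noteq> y\<close> u unfolding strictly_convex_on_def by blast
  ultimately show "f ((1 - u) *\<^sub>R x + u *\<^sub>R y) + g ((1 - u) *\<^sub>R x + u *\<^sub>R y)
      < (1 - u) * (f x + g x) + u * (f y + g y)"
    by (simp add: algebra_simps)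
qed

lemma strictly_convex_on_norm_power2:
  fixes c :: real
  assumes "c > 0"
  shows "strictly_convex_on (UNIV :: 'a::real_inner set) (\<lambda>x. c * (norm x)\<^sup>2)"
  unfolding strictly_convex_on_def
proof (intro conjI convex_UNIV ballI impI allI)
  fix x y :: 'a and u :: real
  assume "x \<noteq> y" and u: "0 < u \<and> u < 1"
  have "(1 - u) * (norm x)\<^sup>2 + u * (norm y)\<^sup>2 - (norm ((1 - u) *\<^sub>R x + u *\<^sub>R y))\<^sup>2
      = u * (1 - u) * (norm (x - y))\<^sup>2"
    by (simp add: power2_norm_eq_inner inner_add_left inner_add_right inner_diff_left
        inner_diff_right inner_commute algebra_simps)
  also have "\<dots> > 0"
    using u \<open>x \<noteq> y\<close> by simp
  finally have "(norm ((1 - u) *\<^sub>R x + u *\<^sub>R y))\<^sup>2 < (1 - u) * (norm x)\<^sup>2 + u * (norm y)\<^sup>2"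
    by simp
  from mult_strict_left_mono[OF this \<open>c > 0\<close>]
  show "c * (norm ((1 - u) *\<^sub>R x + u *\<^sub>R y))\<^sup>2 < (1 - u) * (c * (norm x)\<^sup>2) + u * (c * (norm y)\<^sup>2)"
    by (simp add: algebra_simps)
qed

lemma strictly_convex_on_minimizer_unique:
  assumes "strictly_convex_on UNIV g" "is_minimizer g a" "is_minimizer g b"
  shows "a = b"
proof (rule ccontr)
  assume "a \<noteq> b"
  have half: "0 < (1/2 :: real) \<and> (1/2 :: real) < 1"
    by simp
  have "g ((1 - 1/2) *\<^sub>R a + (1/2) *\<^sub>R b) < (1 - 1/2) * g a + (1/2) * g b"
    using assms(1) \<open>a \<noteq> b\<close> half unfolding strictly_convex_on_def by blast
  moreover have "g a \<le> g ((1 - 1/2) *\<^sub>R a + (1/2) *\<^sub>R b)" "g b \<le> g a"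
    using assms(2,3) unfolding is_minimizer_def by auto
  ultimately show False by simp
qed

lemma convex_on_sum_fun:
  assumes "convex S" "\<And>i. i \<in> I \<Longrightarrow> convex_on S (f i)"
  shows "convex_on S (\<lambda>x. \<Sum>i\<in>I. f i x)"
  using assms(2)
proof (induction I rule: infinite_finite_induct)
  case (infinite I)
  then show ?case using assms(1) by (simp add: convex_on_const)
next
  case empty
  then show ?case using assms(1) by (simp add: convex_on_const)
next
  case (insert i I)
  then show ?case by (simp add: convex_on_add)
qed

lemma convex_on_compose_linear:
  assumes "convex_on UNIV g" "linear f"
  shows "convex_on UNIV (\<lambda>x. g (f x))"
  using assms(1) unfolding convex_on_def
  by (simp add: linear_add[OF assms(2)] linear_scale[OF assms(2)])

lemma expfam_loss_convex:
  assumes "convex_on UNIV A"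
  shows "convex_on UNIV (expfam_loss A y)"
proof -
  have "convex_on UNIV (\<lambda>f. - y * f)"
    by (rule convex_onI) (simp_all add: algebra_simps)
  from this assms show ?thesis
    unfolding expfam_loss_def by (rule convex_on_add)
qed

lemma reg_risk_strictly_convex:
  assumes "convex_on UNIV A" "\<delta> > 0"
  shows "strictly_convex_on UNIV (reg_risk A \<phi> y \<delta> S)"
proof -
  have "convex_on UNIV (\<lambda>w. \<Sum>i\<in>S. expfam_loss A (y i) (\<phi> i \<bullet> w))"
    by (intro convex_on_sum_fun convex_UNIV convex_on_compose_linear[OF expfam_loss_convex[OF assms(1)]]
        bounded_linear.linear bounded_linear_inner_right)
  moreover have "strictly_convex_on UNIV (\<lambda>w :: real ^ 'p. \<delta> / 2 * (norm w)\<^sup>2)"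
    by (rule strictly_convex_on_norm_power2) (simp add: assms(2))
  ultimately show ?thesis
    unfolding reg_risk_def ex_loss_def glm_out_def by (rule strictly_convex_on_add)
qed

lemma reg_risk_insert:
  assumes "finite S" "j \<notin> S"
  shows "reg_risk A \<phi> y \<delta> (insert j S) w = ex_loss A \<phi> y j w + reg_risk A \<phi> y \<delta> S w"
  using assms unfolding reg_risk_def by simp

lemma reg_risk_remove:
  assumes "finite S" "k \<in> S"
  shows "reg_risk A \<phi> y \<delta> (S - {k}) w = - ex_loss A \<phi> y k w + reg_risk A \<phi> y \<delta> S w"
  using assms unfolding reg_risk_def by (simp add: sum_diff1)

lemma is_minimizer_add_const:
  "is_minimizer (\<lambda>x. g x + c) x \<longleftrightarrow> is_minimizer g x"
  unfolding is_minimizer_def by simp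

lemma is_minimizer_line_derivative_zero:
  fixes g :: "'a::real_vector \<Rightarrow> real"
  assumes "is_minimizer g x" "((\<lambda>t. g (x + t *\<^sub>R v)) has_real_derivative d) (at 0)"
  shows "d = 0"
proof (rule DERIV_local_min[OF assms(2), of 1])
  show "\<forall>t. \<bar>0 - t\<bar> < 1 \<longrightarrow> g (x + 0 *\<^sub>R v) \<le> g (x + t *\<^sub>R v)"
    using assms(1) unfolding is_minimizer_def by simp
qed simp

lemma reg_risk_line_derivative:
  assumes "\<And>f. (A has_real_derivative h f) (at f)"
  shows "((\<lambda>t. reg_risk A \<phi> y \<delta> S (w + t *\<^sub>R v)) has_real_derivative
           (\<Sum>i\<in>S. (h (\<phi> i \<bullet> w) - y i) * (\<phi> i \<bullet> v)) + \<delta> * (w \<bullet> v)) (at 0)"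
proof -
  have line: "reg_risk A \<phi> y \<delta> S (w + t *\<^sub>R v)
      = (\<Sum>i\<in>S. - y i * (\<phi> i \<bullet> w + t * (\<phi> i \<bullet> v)) + A (\<phi> i \<bullet> w + t * (\<phi> i \<bullet> v)))
        + \<delta> / 2 * (w \<bullet> w + 2 * t * (w \<bullet> v) + t\<^sup>2 * (v \<bullet> v))" for t
    unfolding reg_risk_def ex_loss_def expfam_loss_def glm_out_def power2_norm_eq_inner
    by (simp add: inner_add_left inner_add_right inner_commute power2_eq_square algebra_simps)
  show ?thesis
    unfolding line
    by (rule derivative_eq_intros DERIV_chain2[OF assms] refl)+ (simp add: algebra_simps)
qed

lemma reg_risk_minimizer_stationary:
  assumes "\<And>f. (A has_real_derivative h f) (at f)" "is_minimizer (reg_risk A \<phi> y \<delta> S) w"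
  shows "(\<Sum>i\<in>S. (h (\<phi> i \<bullet> w) - y i) * (\<phi> i \<bullet> v)) + \<delta> * (w \<bullet> v) = 0"
  using is_minimizer_line_derivative_zero[OF assms(2) reg_risk_line_derivative[OF assms(1)]] .

lemma kprior_eq_reg_risk:
  assumes "\<And>f. (A has_real_derivative h f) (at f)" "is_minimizer (reg_risk A \<phi> y \<delta> D) wstar"
  shows "kprior A h \<phi> \<delta> D wstar w = reg_risk A \<phi> y \<delta> D w + \<delta> / 2 * (norm wstar)\<^sup>2"
proof -
  have "kprior A h \<phi> \<delta> D wstar w - reg_risk A \<phi> y \<delta> D w
      = - (\<Sum>i\<in>D. (h (\<phi> i \<bullet> wstar) - y i) * (\<phi> i \<bullet> w)) + \<delta> / 2 * ((norm (w - wstar))\<^sup>2 - (norm w)\<^sup>2)"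
    unfolding kprior_def reg_risk_def ex_loss_def expfam_loss_def glm_out_def
    by (simp add: algebra_simps sum.distrib sum_subtractf sum_negf)
  also have "(norm (w - wstar))\<^sup>2 - (norm w)\<^sup>2 = (norm wstar)\<^sup>2 - 2 * (wstar \<bullet> w)"
    by (simp add: power2_norm_eq_inner inner_diff_left inner_diff_right inner_commute)
  finally show ?thesis
    using reg_risk_minimizer_stationary[OF assms, of w] by (simp add: algebra_simps)
qed

theorem theorem1:
  fixes A h :: "real \<Rightarrow> real"
    and \<phi> :: "'i \<Rightarrow> real ^ 'p"
    and y :: "'i \<Rightarrow> real"
    and \<delta> :: real
    and D :: "'i set"
    and j k :: 'i
    and wstar wplus wminus whplus whminus :: "real ^ 'p"
  assumes finD: "finite D"
    and deriv: "\<And>f. (A has_real_derivative h f) (at f)"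
    and sconv: "strictly_convex_on UNIV A"
    and delta_pos: "\<delta> > 0"
    and j_new: "j \<notin> D"
    and k_old: "k \<in> D"
    and wstar_min: "is_minimizer (reg_risk A \<phi> y \<delta> D) wstar"
    and wplus_min: "is_minimizer (reg_risk A \<phi> y \<delta> (insert j D)) wplus"
    and wminus_min: "is_minimizer (reg_risk A \<phi> y \<delta> (D - {k})) wminus"
    and whplus_min: "is_minimizer (\<lambda>w. ex_loss A \<phi> y j w + kprior A h \<phi> \<delta> D wstar w) whplus"
    and whminus_min: "is_minimizer (\<lambda>w. - ex_loss A \<phi> y k w + kprior A h \<phi> \<delta> D wstar w) whminus"
  shows "wplus = whplus \<and> wminus = whminus"
proof -
  let ?c = "\<delta> / 2 * (norm wstar)\<^sup>2"
  have kprior: "kprior A h \<phi> \<delta> D wstar w = reg_risk A \<phi> y \<delta> D w + ?c" for w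
    using kprior_eq_reg_risk[OF deriv wstar_min] .
  have "(\<lambda>w. ex_loss A \<phi> y j w + kprior A h \<phi> \<delta> D wstar w) = (\<lambda>w. reg_risk A \<phi> y \<delta> (insert j D) w + ?c)"
    by (simp add: kprior reg_risk_insert[OF finD j_new] add.assoc)
  with whplus_min have whplus: "is_minimizer (reg_risk A \<phi> y \<delta> (insert j D)) whplus"
    by (simp add: is_minimizer_add_const)
  have "(\<lambda>w. - ex_loss A \<phi> y k w + kprior A h \<phi> \<delta> D wstar w) = (\<lambda>w. reg_risk A \<phi> y \<delta> (D - {k}) w + ?c)"
    by (simp add: kprior reg_risk_remove[OF finD k_old] algebra_simps)
  with whminus_min have whminus: "is_minimizer (reg_risk A \<phi> y \<delta> (D - {k})) whminus"
    by (simp add: is_minimizer_add_const)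
  have "strictly_convex_on UNIV (reg_risk A \<phi> y \<delta> S)" for S
    using reg_risk_strictly_convex[OF strictly_convex_on_imp_convex_on[OF sconv] delta_pos] .
  with wplus_min whplus wminus_min whminus show ?thesis
    using strictly_convex_on_minimizer_unique by blast
qed

end
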